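(* Let $(X,\tau)$ be a $T_1$ topological space. Suppose that for every continuous map $f:(X,\tau)\to(\mathcal P(X),\tau_{\mathcal S(X)})$ with $x\in f(x)$ for all $x\in X$, there exist a continuous neighborhood refinement map $f_*$ of $f$ and a set $D\subseteq X$ such that the map $g:(X,\tau)\to(\mathcal P(D),\tau_{\mathcal S(D)})$, $g(x)=f_*(x)\cap D$, satisfies (1) $g^{-1}(\{\emptyset\})=\emptyset$, and (2) $\left|\bigcup_{y\in N^*(x)}g(y)\right|<\omega_0$ for all $x\in X$, where $N^*:X\to\tau$ is given by $N^*(a)=f_*^{-1}(\mathcal U_X(a))=\{x\in X: a\in f_*(x)\}$. Then $X$ is a paracompact D-space.
   Context: For a set $A$ and $a\in A$, $\mathcal U_A(a)=\{B\subseteq A: a\in B\}$; the principal ultrafilter topology $\tau_{\mathcal S(A)}$ on $\mathcal P(A)$ is generated by the subbase $\{\mathcal U_A(a): a\in A\}$. A continuous neighborhood refinement map of $f$ is a continuous map $f_*:(X,\tau)\to(\mathcal P(X),\tau_{\mathcal S(X)})$ with $x\in f_*(x)\subseteq f(x)$ for all $x$. Paracompact means every open cover has a locally finite open refinement (no Hausdorff assumption). An open neighborhood assignment is $N:X\to\tau$ with $x\in N(x)$; $X$ is a D-space if every open neighborhood assignment $N$ admits a closed discrete $D\subseteq X$ with $\bigcup_{d\in D}N(d)=X$. *)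

theory Defs
  imports "HOL-Analysis.Analysis"
begin

definition U_ult :: "'a set \<Rightarrow> 'a \<Rightarrow> 'a set set" where
  "U_ult A a = {B. B \<subseteq> A \<and> a \<in> B}"

text \<open>Principal ultrafilter topology on Pow A, generated by the subbase
  {U_A(a) | a in A}; the whole space Pow A is included as the empty intersection.\<close>
definition pu_top :: "'a set \<Rightarrow> 'a set topology" where
  "pu_top A = topology_generated_by (insert (Pow A) {U_ult A a | a. a \<in> A})"

definition cont_nbhd_refinement ::
    "'a topology \<Rightarrow> ('a \<Rightarrow> 'a set) \<Rightarrow> ('a \<Rightarrow> 'a set) \<Rightarrow> bool" where
  "cont_nbhd_refinement T f fs \<longleftrightarrow>
     continuous_map T (pu_top (topspace T)) fs \<and>
     (\<forall>x\<in>topspace T. x \<in> fs x \<and> fs x \<subseteq> f x)"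

definition locally_finite_in :: "'a topology \<Rightarrow> 'a set set \<Rightarrow> bool" where
  "locally_finite_in T \<V> \<longleftrightarrow>
     (\<forall>x\<in>topspace T. \<exists>W. openin T W \<and> x \<in> W \<and> finite {V\<in>\<V>. V \<inter> W \<noteq> {}})"

definition paracompact_space :: "'a topology \<Rightarrow> bool" where
  "paracompact_space T \<longleftrightarrow>
     (\<forall>\<U>. (\<forall>U\<in>\<U>. openin T U) \<and> \<Union>\<U> = topspace T \<longrightarrow>
        (\<exists>\<V>. (\<forall>V\<in>\<V>. openin T V) \<and> \<Union>\<V> = topspace T \<and>
              (\<forall>V\<in>\<V>. \<exists>U\<in>\<U>. V \<subseteq> U) \<and> locally_finite_in T \<V>))"

definition closed_discrete_in :: "'a topology \<Rightarrow> 'a set \<Rightarrow> bool" where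
  "closed_discrete_in T D \<longleftrightarrow> D \<subseteq> topspace T \<and> closedin T D \<and>
     (\<forall>x\<in>D. \<exists>W. openin T W \<and> W \<inter> D = {x})"

definition D_space :: "'a topology \<Rightarrow> bool" where
  "D_space T \<longleftrightarrow>
     (\<forall>N. (\<forall>x\<in>topspace T. openin T (N x) \<and> x \<in> N x) \<longrightarrow>
        (\<exists>D. closed_discrete_in T D \<and> (\<Union>d\<in>D. N d) = topspace T))"

end

theory Submission
  imports Defs
begin

text \<open>An open neighbourhood assignment \<open>M\<close> is the same thing as a continuous map
  \<open>x \<mapsto> {a. x \<in> M a}\<close> into the principal ultrafilter topology containing each \<open>x\<close>.
  Feeding this map to the hypothesis yields a set \<open>D\<close> and smaller neighbourhoods
  \<open>N a = {x. a \<in> f\<^sub>* x} \<subseteq> M a\<close> such that the \<open>N d\<close> with \<open>d \<in> D\<close> cover the space and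
  each \<open>N x\<close> meets only finitely many of them. The cover \<open>{N d | d \<in> D}\<close> is a locally
  finite open refinement of any cover to which \<open>M\<close> was adapted, and \<open>D\<close> has finite
  trace on every \<open>N x\<close>, which in a \<open>T\<^sub>1\<close> space makes it closed discrete.\<close>

lemma continuous_map_pu_top_iff:
  "continuous_map T (pu_top (topspace T)) g \<longleftrightarrow>
     (\<forall>x\<in>topspace T. g x \<subseteq> topspace T) \<and>
     (\<forall>a\<in>topspace T. openin T {x\<in>topspace T. a \<in> g x})"
proof -
  let ?X = "topspace T"
  let ?S = "insert (Pow ?X) {U_ult ?X a | a. a \<in> ?X}"
  have union_subbase: "\<Union>?S = Pow ?X" by (auto simp: U_ult_def)
  have preimage_U_ult: "g -` U_ult ?X a \<inter> ?X = {x\<in>?X. a \<in> g x}"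
    if "\<forall>x\<in>?X. g x \<subseteq> ?X" for a using that by (auto simp: U_ult_def)
  show ?thesis
    unfolding pu_top_def continuous_on_generated_topo_iff union_subbase
  proof
    assume cont: "(\<forall>U. U \<in> ?S \<longrightarrow> openin T (g -` U \<inter> ?X)) \<and> g ` ?X \<subseteq> Pow ?X"
    then have into: "\<forall>x\<in>?X. g x \<subseteq> ?X" by blast
    have "openin T {x\<in>?X. a \<in> g x}" if "a \<in> ?X" for a
    proof -
      have "U_ult ?X a \<in> ?S" using that by blast
      then have "openin T (g -` U_ult ?X a \<inter> ?X)" using cont by blast
      then show ?thesis using preimage_U_ult[OF into, of a] by simp
    qed
    with into show "(\<forall>x\<in>?X. g x \<subseteq> ?X) \<and> (\<forall>a\<in>?X. openin T {x\<in>?X. a \<in> g x})"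
      by blast
  next
    assume g: "(\<forall>x\<in>?X. g x \<subseteq> ?X) \<and> (\<forall>a\<in>?X. openin T {x\<in>?X. a \<in> g x})"
    have "openin T (g -` U \<inter> ?X)" if "U \<in> ?S" for U
      using that
    proof (elim insertE)
      assume "U = Pow ?X"
      moreover have "g -` Pow ?X \<inter> ?X = ?X" using g by auto
      ultimately show ?thesis by simp
    next
      assume "U \<in> {U_ult ?X a | a. a \<in> ?X}"
      then obtain a where "a \<in> ?X" "U = U_ult ?X a" by blast
      then show ?thesis using g preimage_U_ult[of a] by simp
    qed
    then show "(\<forall>U. U \<in> ?S \<longrightarrow> openin T (g -` U \<inter> ?X)) \<and> g ` ?X \<subseteq> Pow ?X"
      using g by blast
  qed
qed

definition locally_finite_subassignable :: "'a topology \<Rightarrow> bool" where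
  "locally_finite_subassignable T \<longleftrightarrow>
     (\<forall>M. (\<forall>x\<in>topspace T. openin T (M x) \<and> x \<in> M x) \<longrightarrow>
        (\<exists>D N. D \<subseteq> topspace T \<and>
           (\<forall>a\<in>topspace T. openin T (N a) \<and> a \<in> N a \<and> N a \<subseteq> M a) \<and>
           (\<Union>d\<in>D. N d) = topspace T \<and>
           (\<forall>x\<in>topspace T. finite {d\<in>D. N d \<inter> N x \<noteq> {}})))"

lemma locally_finite_subassignableE:
  assumes "locally_finite_subassignable T"
    and "\<forall>x\<in>topspace T. openin T (M x) \<and> x \<in> M x"
  obtains D N where "D \<subseteq> topspace T"
    and "\<forall>a\<in>topspace T. openin T (N a) \<and> a \<in> N a \<and> N a \<subseteq> M a"
    and "(\<Union>d\<in>D. N d) = topspace T"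
    and "\<forall>x\<in>topspace T. finite {d\<in>D. N d \<inter> N x \<noteq> {}}"
  using assms unfolding locally_finite_subassignable_def
  by (elim allE[of _ M] impE exE conjE) (assumption, rule that)

lemma locally_finite_subassignable_if_refinements:
  assumes "\<forall>f. continuous_map T (pu_top (topspace T)) f \<and> (\<forall>x\<in>topspace T. x \<in> f x) \<longrightarrow>
           (\<exists>fs D. cont_nbhd_refinement T f fs \<and> D \<subseteq> topspace T \<and>
              (\<forall>x\<in>topspace T. fs x \<inter> D \<noteq> {}) \<and>
              (\<forall>x\<in>topspace T.
                 finite (\<Union>y\<in>{z\<in>topspace T. x \<in> fs z}. fs y \<inter> D)))"
  shows "locally_finite_subassignable T"
  unfolding locally_finite_subassignable_def
proof (intro allI impI)
  let ?X = "topspace T"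
  fix M assume M: "\<forall>x\<in>?X. openin T (M x) \<and> x \<in> M x"
  define f where "f x = {a\<in>?X. x \<in> M a}" for x
  have f_dual: "{x\<in>?X. a \<in> f x} = M a" if "a \<in> ?X" for a
    using M openin_subset that unfolding f_def by blast
  have f_cont: "continuous_map T (pu_top ?X) f"
    unfolding continuous_map_pu_top_iff
  proof (intro conjI ballI)
    show "f x \<subseteq> ?X" for x by (auto simp: f_def)
    show "openin T {x\<in>?X. a \<in> f x}" if "a \<in> ?X" for a
      using M f_dual that by simp
  qed
  have f_refl: "\<forall>x\<in>?X. x \<in> f x" using M by (auto simp: f_def)
  from assms[rule_format, OF conjI[OF f_cont f_refl]] obtain fs D where fs: "cont_nbhd_refinement T f fs" and D: "D \<subseteq> ?X"
    and meets_D: "\<forall>x\<in>?X. fs x \<inter> D \<noteq> {}"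
    and finite_star: "\<forall>x\<in>?X. finite (\<Union>y\<in>{z\<in>?X. x \<in> fs z}. fs y \<inter> D)"
    by blast
  have fs_open: "\<forall>a\<in>?X. openin T {x\<in>?X. a \<in> fs x}"
    and fs_nbhd: "\<forall>x\<in>?X. x \<in> fs x \<and> fs x \<subseteq> f x"
    using fs by (auto simp: cont_nbhd_refinement_def continuous_map_pu_top_iff)
  define N where "N a = {x\<in>?X. a \<in> fs x}" for a
  have "finite {d\<in>D. N d \<inter> N x \<noteq> {}}" if x: "x \<in> ?X" for x
  proof (rule finite_subset)
    show "{d\<in>D. N d \<inter> N x \<noteq> {}} \<subseteq> (\<Union>y\<in>{z\<in>?X. x \<in> fs z}. fs y \<inter> D)"
      by (auto simp: N_def)
  qed (use finite_star x in blast)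
  moreover have "(\<Union>d\<in>D. N d) = ?X"
    using meets_D by (auto simp: N_def)
  moreover have "\<forall>a\<in>?X. openin T (N a) \<and> a \<in> N a \<and> N a \<subseteq> M a"
    using fs_open fs_nbhd by (auto simp: N_def f_def)
  ultimately show "\<exists>D N. D \<subseteq> ?X \<and> (\<forall>a\<in>?X. openin T (N a) \<and> a \<in> N a \<and> N a \<subseteq> M a) \<and>
      (\<Union>d\<in>D. N d) = ?X \<and> (\<forall>x\<in>?X. finite {d\<in>D. N d \<inter> N x \<noteq> {}})"
    using D by (intro exI[of _ D] exI[of _ N]) blast
qed

lemma paracompact_space_if_locally_finite_subassignable:
  assumes "locally_finite_subassignable T"
  shows "paracompact_space T"
  unfolding paracompact_space_def
proof (intro allI impI, elim conjE)
  let ?X = "topspace T"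
  fix \<U> assume open_\<U>: "\<forall>U\<in>\<U>. openin T U" and cover: "\<Union>\<U> = ?X"
  have "\<forall>a\<in>?X. \<exists>U\<in>\<U>. a \<in> U" using cover by blast
  then obtain C where C: "\<forall>a\<in>?X. C a \<in> \<U> \<and> a \<in> C a" by metis
  then have C_nbhd: "\<forall>a\<in>?X. openin T (C a) \<and> a \<in> C a" using open_\<U> by blast
  obtain D N where D: "D \<subseteq> ?X"
    and N: "\<forall>a\<in>?X. openin T (N a) \<and> a \<in> N a \<and> N a \<subseteq> C a"
    and N_cover: "(\<Union>d\<in>D. N d) = ?X"
    and N_finite: "\<forall>x\<in>?X. finite {d\<in>D. N d \<inter> N x \<noteq> {}}"
    by (rule locally_finite_subassignableE[OF assms C_nbhd])
  have "locally_finite_in T (N ` D)"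
    unfolding locally_finite_in_def
  proof
    fix x assume x: "x \<in> ?X"
    have "{V\<in>N ` D. V \<inter> N x \<noteq> {}} = N ` {d\<in>D. N d \<inter> N x \<noteq> {}}" by blast
    then have "finite {V\<in>N ` D. V \<inter> N x \<noteq> {}}" using N_finite x by simp
    moreover have "openin T (N x)" "x \<in> N x" using N x by auto
    ultimately show "\<exists>W. openin T W \<and> x \<in> W \<and> finite {V\<in>N ` D. V \<inter> W \<noteq> {}}"
      by blast
  qed
  moreover have "\<forall>V\<in>N ` D. \<exists>U\<in>\<U>. V \<subseteq> U" using C N D by blast
  moreover have "\<forall>V\<in>N ` D. openin T V" using N D by blast
  ultimately show "\<exists>\<V>. (\<forall>V\<in>\<V>. openin T V) \<and> \<Union>\<V> = ?X \<and>
      (\<forall>V\<in>\<V>. \<exists>U\<in>\<U>. V \<subseteq> U) \<and> locally_finite_in T \<V>"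
    using N_cover by (intro exI[of _ "N ` D"]) simp
qed

lemma closed_discrete_in_if_finite_traces:
  assumes "t1_space T" "D \<subseteq> topspace T"
    and finite_trace: "\<And>x. x \<in> topspace T \<Longrightarrow> \<exists>W. openin T W \<and> x \<in> W \<and> finite (W \<inter> D)"
  shows "closed_discrete_in T D"
proof -
  let ?X = "topspace T"
  have isolating: "\<exists>W. openin T W \<and> x \<in> W \<and> W \<inter> D \<subseteq> {x}" if x: "x \<in> ?X" for x
  proof -
    obtain W where W: "openin T W" "x \<in> W" "finite (W \<inter> D)" using finite_trace x by blast
    have "closedin T (W \<inter> D - {x})"
      using assms(1,2) W(3) unfolding t1_space_closedin_finite by auto
    then have "openin T (W - (W \<inter> D - {x}))" using W(1) by auto
    then show ?thesis using W(2) by blast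
  qed
  have "openin T (?X - D)"
  proof (subst openin_subopen, intro ballI)
    fix x assume "x \<in> ?X - D"
    then show "\<exists>W. openin T W \<and> x \<in> W \<and> W \<subseteq> ?X - D"
      using isolating[of x] openin_subset by fastforce
  qed
  then have "closedin T D" using assms(2) by (simp add: closedin_def)
  moreover have "\<exists>W. openin T W \<and> W \<inter> D = {x}" if "x \<in> D" for x
    using isolating[of x] assms(2) that by blast
  ultimately show ?thesis
    unfolding closed_discrete_in_def using assms(2) by blast
qed

lemma D_space_if_locally_finite_subassignable:
  assumes "t1_space T" "locally_finite_subassignable T"
  shows "D_space T"
  unfolding D_space_def
proof (intro allI impI)
  let ?X = "topspace T"
  fix M assume M: "\<forall>x\<in>?X. openin T (M x) \<and> x \<in> M x"
  obtain D N where D: "D \<subseteq> ?X"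
    and N: "\<forall>a\<in>?X. openin T (N a) \<and> a \<in> N a \<and> N a \<subseteq> M a"
    and N_cover: "(\<Union>d\<in>D. N d) = ?X"
    and N_finite: "\<forall>x\<in>?X. finite {d\<in>D. N d \<inter> N x \<noteq> {}}"
    by (rule locally_finite_subassignableE[OF assms(2) M])
  have "\<exists>W. openin T W \<and> x \<in> W \<and> finite (W \<inter> D)" if x: "x \<in> ?X" for x
  proof (intro exI conjI)
    show "openin T (N x)" "x \<in> N x" using N x by auto
    have "N x \<inter> D \<subseteq> {d\<in>D. N d \<inter> N x \<noteq> {}}" using N D by blast
    then show "finite (N x \<inter> D)" using N_finite x by (blast intro: finite_subset)
  qed
  then have "closed_discrete_in T D"
    by (rule closed_discrete_in_if_finite_traces[OF assms(1) D])
  moreover have "(\<Union>d\<in>D. M d) = ?X"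
  proof
    show "(\<Union>d\<in>D. M d) \<subseteq> ?X"
      using M D by (auto dest: openin_subset)
    show "?X \<subseteq> (\<Union>d\<in>D. M d)"
      unfolding N_cover[symmetric] using N D by blast
  qed
  ultimately show "\<exists>D. closed_discrete_in T D \<and> (\<Union>d\<in>D. M d) = ?X" by blast
qed

theorem mainTheorem7:
  fixes T :: "'a topology"
  assumes "t1_space T"
    and "\<forall>f. continuous_map T (pu_top (topspace T)) f \<and> (\<forall>x\<in>topspace T. x \<in> f x) \<longrightarrow>
           (\<exists>fs D. cont_nbhd_refinement T f fs \<and> D \<subseteq> topspace T \<and>
              (\<forall>x\<in>topspace T. fs x \<inter> D \<noteq> {}) \<and>
              (\<forall>x\<in>topspace T.
                 finite (\<Union>y\<in>{z\<in>topspace T. x \<in> fs z}. fs y \<inter> D)))"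
  shows "paracompact_space T \<and> D_space T"
proof -
  have "locally_finite_subassignable T"
    using assms(2) by (rule locally_finite_subassignable_if_refinements)
  then show ?thesis
    using assms(1) by (simp add: paracompact_space_if_locally_finite_subassignable
      D_space_if_locally_finite_subassignable)
qed

end
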